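(* Let $M$ be the blow-up of $\mathbb{CP}_2$ at two distinct points (so $c_1^2=7$), with Kähler cone $\mathcal K\subset H^2(M,\mathbb R)$. Let $\check{\mathcal K}=\mathcal K/\mathbb R^+$ be its quotient under positive scalar multiplication. For $t\in\mathbb R$, let $\mathbf Y_t\subset\check{\mathcal K}$ be the set of classes with $\mathcal T(\Omega)=(c_1\cdot\Omega)^2/\Omega^2\le t$; note that $\mathcal T$ is homogeneous of degree $0$ and so descends to $\check{\mathcal K}$. If $7<t<8$, then $\mathbf Y_t$ is homeomorphic to the closed unit $2$-disk; in particular, it is compact.
   Context: The Kähler cone is the set of cohomology classes of Kähler forms compatible with the complex structure. Products of classes denote the intersection pairing. *)

theory Defs
  imports "HOL-Analysis.Analysis"
begin

text \<open>Model of H^2(M,R) for M = blow-up of CP^2 at two distinct points.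
  A class is written in the basis (H, E1, E2): the vector x stands for
  x$1 H + x$2 E1 + x$3 E2, where H is the hyperplane class and E1, E2 the
  exceptional classes.  Intersection pairing: H.H = 1, Ei.Ei = -1, all
  mixed products 0.\<close>

definition cls :: "real \<Rightarrow> real \<Rightarrow> real \<Rightarrow> real^3" where
  "cls a e1 e2 = vector [a, e1, e2]"

definition ipair :: "real^3 \<Rightarrow> real^3 \<Rightarrow> real" where
  "ipair x y = x$1 * y$1 - x$2 * y$2 - x$3 * y$3"

definition hyp :: "real^3" where "hyp = cls 1 0 0"
definition exc1 :: "real^3" where "exc1 = cls 0 1 0"
definition exc2 :: "real^3" where "exc2 = cls 0 0 1"

definition chern1 :: "real^3" where "chern1 = cls 3 (-1) (-1)"

text \<open>Kaehler cone: classes positive on the three (-1)-curves E1, E2 and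
  H - E1 - E2, which generate the effective cone (Nakai-Moishezon /
  Kleiman criterion for this del Pezzo surface).\<close>
definition kahler_cone :: "(real^3) set" where
  "kahler_cone = {w. ipair w exc1 > 0 \<and> ipair w exc2 > 0 \<and>
                     ipair w (hyp - exc1 - exc2) > 0}"

definition calT :: "real^3 \<Rightarrow> real" where
  "calT w = (ipair chern1 w)^2 / ipair w w"

definition ray_rel :: "((real^3) \<times> (real^3)) set" where
  "ray_rel = {(x, y). x \<in> kahler_cone \<and> y \<in> kahler_cone \<and> (\<exists>c>0. y = c *\<^sub>R x)}"

definition kcheck :: "(real^3) set set" where
  "kcheck = kahler_cone // ray_rel"

definition kcheck_top :: "(real^3) set topology" where
  "kcheck_top = topology (\<lambda>U. U \<subseteq> kcheck \<and>
      openin (top_of_set kahler_cone) (\<Union>U))"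

definition Yt :: "real \<Rightarrow> (real^3) set set" where
  "Yt t = {C \<in> kcheck. \<forall>w\<in>C. calT w \<le> t}"

end

theory Submission
  imports Defs
begin

text \<open>Every ray of the Kaehler cone meets the affine plane of classes H + v1 E1 + v2 E2 exactly
  once, and the quotient topology on rays is the topology of this slice, which is the open
  triangle v1 < 0, v2 < 0, 1 + v1 + v2 > 0. On the slice, T \<le> t reads
  (3 + v1 + v2)^2 + t (v1^2 + v2^2) \<le> t: a filled ellipse, which has interior points once t > 7
  and stays inside the triangle as long as t < 8. A compact convex planar set with nonempty
  interior is a closed disk.\<close>

lemma kahler_cone_iff:
  "w \<in> kahler_cone \<longleftrightarrow> w$2 < 0 \<and> w$3 < 0 \<and> 0 < w$1 + w$2 + w$3"
  by (simp add: kahler_cone_def ipair_def exc1_def exc2_def hyp_def cls_def)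

lemma kahler_cone_pos: "w \<in> kahler_cone \<Longrightarrow> 0 < w$1"
  by (simp add: kahler_cone_iff)

lemma ipair_self_pos:
  assumes "w \<in> kahler_cone"
  shows "0 < ipair w w"
proof -
  have w: "w$2 < 0" "w$3 < 0" "0 < w$1 + w$2 + w$3"
    using assms by (auto simp: kahler_cone_iff)
  have "(w$2)^2 + (w$3)^2 \<le> (- w$2 - w$3)^2"
    using mult_neg_neg[OF w(1,2)] by (simp add: power2_eq_square algebra_simps)
  also have "\<dots> < (w$1)^2"
    using w by (intro power_strict_mono) auto
  finally show ?thesis by (simp add: ipair_def power2_eq_square)
qed

lemma ipair_scaleR_left: "ipair (c *\<^sub>R x) y = c * ipair x y"
  by (simp add: ipair_def algebra_simps)

lemma ipair_scaleR_right: "ipair x (c *\<^sub>R y) = c * ipair x y"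
  by (simp add: ipair_def algebra_simps)

lemma calT_scaleR: "c \<noteq> 0 \<Longrightarrow> calT (c *\<^sub>R w) = calT w"
  by (simp add: calT_def ipair_scaleR_left ipair_scaleR_right power2_eq_square)

subsection \<open>The affine chart H + v1 E1 + v2 E2\<close>

definition slice :: "real^2 \<Rightarrow> real^3" where
  "slice v = cls 1 (v$1) (v$2)"

definition slice_coords :: "real^3 \<Rightarrow> real^2" where
  "slice_coords w = vector [w$2 / w$1, w$3 / w$1]"

definition kahler_slice :: "(real^2) set" where
  "kahler_slice = {v. slice v \<in> kahler_cone}"

lemma slice_nth [simp]: "slice v $ 1 = 1" "slice v $ 2 = v$1" "slice v $ 3 = v$2"
  by (simp_all add: slice_def cls_def)

lemma slice_coords_nth [simp]:
  "slice_coords w $ 1 = w$2 / w$1" "slice_coords w $ 2 = w$3 / w$1"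
  by (simp_all add: slice_coords_def)

lemma slice_coords_slice [simp]: "slice_coords (slice v) = v"
  by (simp add: vec_eq_iff forall_2)

lemma scaleR_slice_slice_coords: "0 < w$1 \<Longrightarrow> w$1 *\<^sub>R slice (slice_coords w) = w"
  by (simp add: vec_eq_iff forall_3)

lemma kahler_slice_iff: "v \<in> kahler_slice \<longleftrightarrow> v$1 < 0 \<and> v$2 < 0 \<and> 0 < 1 + v$1 + v$2"
  by (simp add: kahler_slice_def kahler_cone_iff)

lemma slice_coords_in_kahler_slice:
  assumes "w \<in> kahler_cone"
  shows "slice_coords w \<in> kahler_slice"
proof -
  have "0 < w$1" using assms by (rule kahler_cone_pos)
  moreover have "1 + w$2 / w$1 + w$3 / w$1 = (w$1 + w$2 + w$3) / w$1"
    using \<open>0 < w$1\<close> by (simp add: field_simps)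
  ultimately show ?thesis
    using assms by (simp add: kahler_slice_iff kahler_cone_iff divide_neg_pos)
qed

lemma continuous_on_slice: "continuous_on S slice"
proof -
  have "continuous_on S (\<lambda>v. slice v $ i)" for i
    using exhaust_3[of i] by (elim disjE; simp; intro continuous_intros)
  then show ?thesis
    using continuous_on_vec_lambda[of S "\<lambda>i v. slice v $ i"] by simp
qed

lemma continuous_on_slice_coords: "continuous_on kahler_cone slice_coords"
proof -
  have "continuous_on kahler_cone (\<lambda>w. slice_coords w $ i)" for i
    using exhaust_2[of i]
    by (elim disjE; simp; auto intro!: continuous_intros dest: kahler_cone_pos)
  then show ?thesis
    using continuous_on_vec_lambda[of kahler_cone "\<lambda>i w. slice_coords w $ i"] by simp
qed

subsection \<open>The quotient by positive rescaling\<close>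

lemma ray_rel_iff:
  "(x, y) \<in> ray_rel \<longleftrightarrow>
     x \<in> kahler_cone \<and> y \<in> kahler_cone \<and> slice_coords x = slice_coords y"
proof -
  have "(\<exists>c>0. y = c *\<^sub>R x) \<longleftrightarrow> slice_coords x = slice_coords y"
    if "0 < x$1" "0 < y$1" for x y
  proof
    assume "\<exists>c>0. y = c *\<^sub>R x"
    then show "slice_coords x = slice_coords y" by (auto simp: vec_eq_iff forall_2)
  next
    assume "slice_coords x = slice_coords y"
    then have "y = (y$1 / x$1) *\<^sub>R x"
      using that scaleR_slice_slice_coords by (metis scaleR_scaleR nonzero_divide_eq_eq
          less_irrefl)
    then show "\<exists>c>0. y = c *\<^sub>R x" using that by (intro exI[of _ "y$1 / x$1"]) auto
  qed
  then show ?thesis by (auto simp: ray_rel_def dest: kahler_cone_pos)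
qed

lemma equiv_ray_rel: "equiv kahler_cone ray_rel"
  by (rule equivI) (auto simp: refl_on_def sym_def trans_def ray_rel_iff)

lemma calT_ray_rel: "(x, y) \<in> ray_rel \<Longrightarrow> calT y = calT x"
  by (auto simp: ray_rel_def calT_scaleR)

lemma kcheckE:
  assumes "C \<in> kcheck"
  obtains w where "w \<in> kahler_cone" "C = ray_rel``{w}"
  using assms unfolding kcheck_def by (metis quotientE)

lemma Union_subset_kcheck_eq:
  assumes "U \<subseteq> kcheck"
  shows "\<Union>U = {w \<in> kahler_cone. ray_rel``{w} \<in> U}"
proof (intro set_eqI iffI)
  fix w assume "w \<in> \<Union>U"
  then obtain C where C: "C \<in> U" "w \<in> C" by blast
  then obtain x where x: "x \<in> kahler_cone" "C = ray_rel``{x}"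
    using assms by (meson kcheckE subsetD)
  then have "(x, w) \<in> ray_rel" using C(2) by simp
  then have "w \<in> kahler_cone" "ray_rel``{w} = C"
    using x(2) equiv_class_eq[OF equiv_ray_rel] by (auto simp: ray_rel_iff)
  then show "w \<in> {w \<in> kahler_cone. ray_rel``{w} \<in> U}" using C(1) by simp
next
  fix w assume "w \<in> {w \<in> kahler_cone. ray_rel``{w} \<in> U}"
  then show "w \<in> \<Union>U" using equiv_class_self[OF equiv_ray_rel] by blast
qed

lemma openin_kcheck_top:
  "openin kcheck_top U \<longleftrightarrow> U \<subseteq> kcheck \<and> openin (top_of_set kahler_cone) (\<Union>U)"
proof -
  have "istopology (\<lambda>U. U \<subseteq> kcheck \<and> openin (top_of_set kahler_cone) (\<Union>U))"
    unfolding istopology_def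
  proof (rule conjI; intro allI impI)
    fix S T :: "(real^3) set set"
    assume S: "S \<subseteq> kcheck \<and> openin (top_of_set kahler_cone) (\<Union>S)"
      and T: "T \<subseteq> kcheck \<and> openin (top_of_set kahler_cone) (\<Union>T)"
    then have "\<Union>(S \<inter> T) = \<Union>S \<inter> \<Union>T"
      using Union_subset_kcheck_eq[of "S \<inter> T"] Union_subset_kcheck_eq[of S]
        Union_subset_kcheck_eq[of T] by blast
    then show "S \<inter> T \<subseteq> kcheck \<and> openin (top_of_set kahler_cone) (\<Union>(S \<inter> T))"
      using S T by auto
  next
    fix \<K> :: "(real^3) set set set"
    assume \<K>: "\<forall>U\<in>\<K>. U \<subseteq> kcheck \<and> openin (top_of_set kahler_cone) (\<Union>U)"
    then have "openin (top_of_set kahler_cone) (\<Union>(Union ` \<K>))"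
      by (intro openin_Union) auto
    moreover have "\<Union>(Union ` \<K>) = \<Union>(\<Union>\<K>)" by blast
    ultimately show "\<Union>\<K> \<subseteq> kcheck \<and> openin (top_of_set kahler_cone) (\<Union>(\<Union>\<K>))"
      using \<K> by (metis Sup_le_iff)
  qed
  then show ?thesis by (simp add: kcheck_top_def)
qed

lemma topspace_kcheck_top: "topspace kcheck_top = kcheck"
proof -
  have "openin kcheck_top kcheck"
    using Union_quotient[OF equiv_ray_rel] by (simp add: openin_kcheck_top kcheck_def)
  moreover have "topspace kcheck_top \<subseteq> kcheck"
    using openin_topspace[of kcheck_top] unfolding openin_kcheck_top by blast
  ultimately show ?thesis
    using openin_subset by blast
qed

lemma quotient_map_ray:
  "quotient_map (top_of_set kahler_cone) kcheck_top (\<lambda>w. ray_rel``{w})"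
  unfolding quotient_map_def topspace_kcheck_top
  by (auto simp: openin_kcheck_top kcheck_def Union_subset_kcheck_eq quotientI elim: quotientE)

definition ray_coords :: "(real^3) set \<Rightarrow> real^2" where
  "ray_coords C = slice_coords (SOME w. w \<in> C)"

lemma ray_coords_ray: "w \<in> kahler_cone \<Longrightarrow> ray_coords (ray_rel``{w}) = slice_coords w"
  unfolding ray_coords_def
  by (rule someI2[of _ w]) (auto simp: equiv_class_self[OF equiv_ray_rel] ray_rel_iff)

lemma homeomorphic_maps_kcheck_kahler_slice:
  "homeomorphic_maps kcheck_top (top_of_set kahler_slice) ray_coords (\<lambda>v. ray_rel``{slice v})"
proof -
  have "continuous_map (top_of_set kahler_cone) (top_of_set kahler_slice) slice_coords"
    using continuous_on_slice_coords slice_coords_in_kahler_slice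
    by (auto simp: continuous_map_in_subtopology)
  then have coords: "continuous_map kcheck_top (top_of_set kahler_slice) ray_coords"
    by (intro continuous_compose_quotient_map[OF quotient_map_ray])
      (auto simp: o_def ray_coords_ray elim!: continuous_map_eq)
  have "continuous_map (top_of_set kahler_slice) (top_of_set kahler_cone) slice"
    using continuous_on_slice by (auto simp: continuous_map_in_subtopology kahler_slice_def)
  then have "continuous_map (top_of_set kahler_slice) kcheck_top ((\<lambda>w. ray_rel``{w}) \<circ> slice)"
    by (rule continuous_map_compose[OF _ quotient_imp_continuous_map[OF quotient_map_ray]])
  then have ray: "continuous_map (top_of_set kahler_slice) kcheck_top (\<lambda>v. ray_rel``{slice v})"
    by (simp only: o_def)
  have "ray_rel``{slice (ray_coords C)} = C" if C: "C \<in> kcheck" for C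
  proof -
    obtain w where w: "w \<in> kahler_cone" "C = ray_rel``{w}"
      using C by (rule kcheckE)
    then have "(w, slice (slice_coords w)) \<in> ray_rel"
      using slice_coords_in_kahler_slice by (simp add: ray_rel_iff kahler_slice_def)
    then have "ray_rel``{slice (slice_coords w)} = ray_rel``{w}"
      by (rule equiv_class_eq[OF equiv_ray_rel, symmetric])
    then show ?thesis
      using w by (simp add: ray_coords_ray)
  qed
  then show ?thesis
    using coords ray by (auto simp: homeomorphic_maps_def topspace_kcheck_top ray_coords_ray
        kahler_slice_def)
qed

lemma Yt_eq_image:
  "Yt t = (\<lambda>v. ray_rel``{slice v}) ` {v \<in> kahler_slice. calT (slice v) \<le> t}"
proof (intro set_eqI iffI)
  fix C assume "C \<in> Yt t"
  then have "C \<in> kcheck" and bounded: "\<forall>w\<in>C. calT w \<le> t" by (simp_all add: Yt_def)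
  from \<open>C \<in> kcheck\<close> obtain w where w: "w \<in> kahler_cone" "C = ray_rel``{w}"
    by (rule kcheckE)
  define v where "v = slice_coords w"
  have v: "v \<in> kahler_slice"
    using w slice_coords_in_kahler_slice by (simp add: v_def)
  then have rel: "(w, slice v) \<in> ray_rel"
    using w by (simp add: ray_rel_iff kahler_slice_def v_def)
  then have "C = ray_rel``{slice v}"
    using w(2) equiv_class_eq[OF equiv_ray_rel] by simp
  moreover have "calT (slice v) \<le> t"
    using bounded rel w(2) by simp
  ultimately show "C \<in> (\<lambda>v. ray_rel``{slice v}) ` {v \<in> kahler_slice. calT (slice v) \<le> t}"
    using v by blast
next
  fix C assume "C \<in> (\<lambda>v. ray_rel``{slice v}) ` {v \<in> kahler_slice. calT (slice v) \<le> t}"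
  then obtain v where v: "slice v \<in> kahler_cone" "calT (slice v) \<le> t" "C = ray_rel``{slice v}"
    by (auto simp: kahler_slice_def)
  have "calT w \<le> t" if "w \<in> C" for w
  proof -
    have "(slice v, w) \<in> ray_rel" using that v(3) by simp
    then show ?thesis using v(2) by (simp add: calT_ray_rel)
  qed
  moreover have "C \<in> kcheck" using v(1,3) by (simp add: kcheck_def quotientI)
  ultimately show "C \<in> Yt t" by (simp add: Yt_def)
qed

lemma Yt_homeomorphic_slice_sublevel:
  "subtopology kcheck_top (Yt t) homeomorphic_space
     top_of_set {v \<in> kahler_slice. calT (slice v) \<le> t}"
proof -
  let ?S = "{v \<in> kahler_slice. calT (slice v) \<le> t}"
  have S: "kahler_slice \<inter> ?S = ?S" by blast
  moreover have "topspace kcheck_top \<inter> Yt t = Yt t"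
    by (auto simp: topspace_kcheck_top Yt_def)
  ultimately have "(\<lambda>v. ray_rel``{slice v}) ` (topspace (top_of_set kahler_slice) \<inter> ?S)
      = topspace kcheck_top \<inter> Yt t"
    by (simp only: topspace_euclidean_subtopology Yt_eq_image)
  then have "homeomorphic_maps (subtopology (top_of_set kahler_slice) ?S)
      (subtopology kcheck_top (Yt t)) (\<lambda>v. ray_rel``{slice v}) ray_coords"
    by (rule homeomorphic_maps_subtopologies
        [OF homeomorphic_maps_sym[THEN iffD1, OF homeomorphic_maps_kcheck_kahler_slice]])
  then have "top_of_set ?S homeomorphic_space subtopology kcheck_top (Yt t)"
    unfolding subtopology_subtopology S by (rule homeomorphic_maps_imp_homeomorphic_space)
  then show ?thesis
    by (subst homeomorphic_space_sym)
qed

subsection \<open>The sublevel set in the chart\<close>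

definition ellipse_form :: "real \<Rightarrow> real^2 \<Rightarrow> real" where
  "ellipse_form t v = (3 + v$1 + v$2)^2 + t * ((v$1)^2 + (v$2)^2)"

lemma calT_slice_le_iff:
  assumes "v \<in> kahler_slice"
  shows "calT (slice v) \<le> t \<longleftrightarrow> ellipse_form t v \<le> t"
proof -
  have "0 < ipair (slice v) (slice v)"
    using assms by (simp add: kahler_slice_def ipair_self_pos)
  then have "calT (slice v) \<le> t \<longleftrightarrow> (ipair chern1 (slice v))^2 \<le> t * ipair (slice v) (slice v)"
    unfolding calT_def by (rule pos_divide_le_eq)
  also have "\<dots> \<longleftrightarrow> ellipse_form t v \<le> t"
    by (simp add: ellipse_form_def ipair_def chern1_def cls_def power2_eq_square algebra_simps)
  finally show ?thesis .
qed

lemma ellipse_imp_first_neg: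
  fixes x y t :: real
  assumes t: "0 < t" "t < 8" and le: "(3 + x + y)^2 + t * (x^2 + y^2) \<le> t"
  shows "x < 0"
proof (rule ccontr)
  assume "\<not> x < 0"
  then have "9 \<le> (3 + x)^2" by (simp add: power2_eq_square algebra_simps)
  \<comment> \<open>Completing the square in y: the minimum over y of the form is t (3 + x)^2 / (1 + t) + t x^2.\<close>
  have "t * (3 + x)^2 \<le> t * (3 + x)^2 + (3 + x + (1 + t) * y)^2" by simp
  also have "\<dots> = (1 + t) * ((3 + x + y)^2 + t * y^2)"
    by (simp add: power2_eq_square algebra_simps)
  also have "\<dots> \<le> (1 + t) * (t - t * x^2)"
    using le t by (intro mult_left_mono) (auto simp: algebra_simps)
  also have "\<dots> \<le> t * (1 + t)"
    using t by (simp add: algebra_simps)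
  finally have "(3 + x)^2 \<le> 1 + t" using t by simp
  with \<open>9 \<le> (3 + x)^2\<close> t show False by simp
qed

lemma ellipse_imp_sum_pos:
  fixes x y t :: real
  assumes t: "4 \<le> t" "t < 8" and le: "(3 + x + y)^2 + t * (x^2 + y^2) \<le> t"
  shows "0 < 1 + x + y"
proof (rule ccontr)
  define s where "s = x + y"
  assume "\<not> 0 < 1 + x + y"
  then have s: "s \<le> -1" by (simp add: s_def)
  have "s^2 / 2 \<le> x^2 + y^2"
    using zero_le_power2[of "x - y"] by (simp add: s_def power2_eq_square field_simps)
  then have "t * (s^2 / 2) \<le> t * (x^2 + y^2)"
    using t by (intro mult_left_mono) auto
  then have "(3 + s)^2 + t * (s^2 / 2) \<le> (3 + x + y)^2 + t * (x^2 + y^2)"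
    by (simp add: s_def add.assoc)
  also have "\<dots> < 4 + t / 2" using le t by simp
  \<comment> \<open>(3 + s)^2 + t s^2/2 - (4 + t/2) factors as (s + 1) (s + 5 + t (s - 1)/2).\<close>
  finally have "(s + 1) * ((s + 5) + t * (s - 1) / 2) < 0"
    by (simp add: power2_eq_square field_simps)
  moreover have "t * (s - 1) \<le> t * (-2)" using s t by (intro mult_left_mono) auto
  then have "(s + 5) + t * (s - 1) / 2 \<le> 0" using s t by linarith
  then have "0 \<le> (s + 1) * ((s + 5) + t * (s - 1) / 2)"
    using s by (intro mult_nonpos_nonpos) auto
  ultimately show False by linarith
qed

lemma ellipse_subset_kahler_slice:
  assumes t: "4 \<le> t" "t < 8"
  shows "{v. ellipse_form t v \<le> t} \<subseteq> kahler_slice"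
proof
  fix v assume "v \<in> {v. ellipse_form t v \<le> t}"
  then have le: "(3 + v$1 + v$2)^2 + t * ((v$1)^2 + (v$2)^2) \<le> t"
    by (simp add: ellipse_form_def)
  then have "(3 + v$2 + v$1)^2 + t * ((v$2)^2 + (v$1)^2) \<le> t"
    by (simp add: add.commute add.left_commute)
  then show "v \<in> kahler_slice"
    using ellipse_imp_first_neg[of t, OF _ t(2) le] ellipse_imp_first_neg[of t, OF _ t(2)]
      ellipse_imp_sum_pos[OF t le] t(1)
    by (simp add: kahler_slice_iff)
qed

lemma convex_ellipse: "0 \<le> t \<Longrightarrow> convex {v. ellipse_form t v \<le> t}"
  unfolding convex_def
proof (intro ballI allI impI, clarsimp)
  fix x y :: "real^2" and u v :: real
  assume t: "0 \<le> t" and x: "ellipse_form t x \<le> t" and y: "ellipse_form t y \<le> t"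
    and uv: "0 \<le> u" "0 \<le> v" "u + v = 1"
  define d1 where "d1 = x$1 - y$1"
  define d2 where "d2 = x$2 - y$2"
  have v: "v = 1 - u" using uv by simp
  have "ellipse_form t (u *\<^sub>R x + v *\<^sub>R y)
      = u * ellipse_form t x + v * ellipse_form t y - u * v * ((d1 + d2)^2 + t * (d1^2 + d2^2))"
    unfolding ellipse_form_def d1_def d2_def v by (simp add: power2_eq_square algebra_simps)
  also have "\<dots> \<le> u * t + v * t"
  proof -
    have "u * ellipse_form t x + v * ellipse_form t y \<le> u * t + v * t"
      using x y uv by (intro add_mono mult_left_mono) auto
    moreover have "0 \<le> u * v * ((d1 + d2)^2 + t * (d1^2 + d2^2))"
      using uv t by simp
    ultimately show ?thesis by linarith
  qed
  also have "\<dots> = t"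
    using uv by (simp flip: distrib_right)
  finally show "ellipse_form t (u *\<^sub>R x + v *\<^sub>R y) \<le> t" .
qed

lemma compact_ellipse:
  assumes "0 < t"
  shows "compact {v. ellipse_form t v \<le> t}"
proof -
  have "closed {v. ellipse_form t v \<le> t}"
    unfolding ellipse_form_def by (intro closed_Collect_le continuous_intros)
  moreover have "norm v \<le> 1" if "ellipse_form t v \<le> t" for v :: "real^2"
  proof -
    have "t * ((v$1)^2 + (v$2)^2) \<le> t * 1"
      using that zero_le_power2[of "3 + v$1 + v$2"] unfolding ellipse_form_def by linarith
    then have "v \<bullet> v \<le> 1"
      using assms by (simp add: inner_vec_def sum_2 power2_eq_square)
    then show ?thesis by (simp add: norm_eq_sqrt_inner)
  qed
  then have "bounded {v. ellipse_form t v \<le> t}"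
    by (auto intro: bounded_subset[OF bounded_cball[of 0 1]])
  ultimately show ?thesis
    by (simp add: compact_eq_bounded_closed)
qed

lemma aff_dim_ellipse:
  assumes "7 < t"
  shows "aff_dim {v. ellipse_form t v \<le> t} = 2"
proof -
  have "open {v. ellipse_form t v < t}"
    unfolding ellipse_form_def by (intro open_Collect_less continuous_intros)
  then have "{v. ellipse_form t v < t} \<subseteq> interior {v. ellipse_form t v \<le> t}"
    by (intro interior_maximal) auto
  moreover have "ellipse_form t (vector [-1/3, -1/3]) < t"
    using assms by (simp add: ellipse_form_def power2_eq_square)
  ultimately have "interior {v. ellipse_form t v \<le> t} \<noteq> {}" by blast
  then show ?thesis
    using aff_dim_convex_Int_nonempty_interior[of UNIV "{v. ellipse_form t v \<le> t}"] by simp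
qed

lemma ellipse_homeomorphic_space_cball:
  assumes "7 < t"
  shows "top_of_set {v. ellipse_form t v \<le> t} homeomorphic_space top_of_set (cball (0::real^2) 1)"
proof -
  have "{v. ellipse_form t v \<le> t} homeomorphic cball (0::real^2) 1"
    using assms
    by (intro homeomorphic_convex_compact_sets convex_ellipse compact_ellipse)
      (auto simp: aff_dim_ellipse aff_dim_cball)
  then obtain f g where "homeomorphism {v. ellipse_form t v \<le> t} (cball (0::real^2) 1) f g"
    unfolding homeomorphic_def by blast
  then have "homeomorphic_maps (top_of_set {v. ellipse_form t v \<le> t})
      (top_of_set (cball (0::real^2) 1)) f g"
    unfolding homeomorphic_maps_def homeomorphism_def
    by (auto simp: continuous_map_subtopology_eu)
  then show ?thesis
    by (rule homeomorphic_maps_imp_homeomorphic_space)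
qed

theorem lemma1:
  fixes t :: real
  assumes "7 < t" and "t < 8"
  shows "subtopology kcheck_top (Yt t) homeomorphic_space
           top_of_set (cball (0::real^2) 1)
         \<and> compactin kcheck_top (Yt t)"
proof
  have "{v \<in> kahler_slice. calT (slice v) \<le> t} = {v. ellipse_form t v \<le> t}"
    using ellipse_subset_kahler_slice[of t] assms by (auto simp: calT_slice_le_iff)
  then have "subtopology kcheck_top (Yt t) homeomorphic_space top_of_set {v. ellipse_form t v \<le> t}"
    using Yt_homeomorphic_slice_sublevel[of t] by (simp only:)
  then show disk: "subtopology kcheck_top (Yt t) homeomorphic_space top_of_set (cball (0::real^2) 1)"
    using ellipse_homeomorphic_space_cball[OF assms(1)] by (rule homeomorphic_space_trans)
  have "compact_space (top_of_set (cball (0::real^2) 1))"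
    by (simp add: compact_space_subtopology)
  then have "compact_space (subtopology kcheck_top (Yt t))"
    using homeomorphic_compact_space[OF disk] by simp
  moreover have "Yt t \<subseteq> topspace kcheck_top"
    by (auto simp: topspace_kcheck_top Yt_def)
  ultimately show "compactin kcheck_top (Yt t)"
    by (simp add: compactin_subspace)
qed

end
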